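(* Let $n\ge 3$ and let $\mathcal{H}$ be the associating hypergraph on $M(D_n,2)$. Then the covering number is $\rho(\mathcal{H})=n+\lceil n/3\rceil$.
   Context: $D_n=\langle x,y\mid x^n=y^2=1,\ xy=yx^{-1}\rangle$. $M(D_n,2)=\{(g,\alpha): g\in D_n,\ \alpha\in\mathbb{Z}_2\}$ with $(g_1,\alpha_1)\circ(g_2,\alpha_2)=(g_1^{1-\alpha_2} g_2^{(-1)^{\alpha_1}} g_1^{\alpha_2},\ \alpha_1+\alpha_2)$. The associating hypergraph $\mathcal{H}$ has vertex set $M(D_n,2)$ ($4n$ vertices), and a 3-element set $\{a,b,c\}$ of distinct elements is a hyperedge when $(a\circ b)\circ c=a\circ(b\circ c)$. The covering number $\rho(\mathcal{H})$ is the minimum number of hyperedges whose union is the whole vertex set. *)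

theory Defs
  imports Complex_Main
begin

text \<open>Concrete model of the dihedral group D_n: the pair (k, s) with k < n stands for
  x^k y^s (s = True meaning y^1). Relations x^n = y^2 = 1 and y x = x^(-1) y give
  (x^a y^s)(x^b y^t) = x^(a + (-1)^s b) y^(s + t).\<close>

type_synonym dih = "nat \<times> bool"

definition dih_carrier :: "nat \<Rightarrow> dih set" where
  "dih_carrier n = {(k, s). k < n}"

definition dih_mult :: "nat \<Rightarrow> dih \<Rightarrow> dih \<Rightarrow> dih" where
  "dih_mult n g h = (case g of (a, s) \<Rightarrow> case h of (b, t) \<Rightarrow>
     ((if s then a + (n - b) else a + b) mod n, s \<noteq> t))"

definition dih_inv :: "nat \<Rightarrow> dih \<Rightarrow> dih" where
  "dih_inv n g = (case g of (a, s) \<Rightarrow> if s then (a, s) else ((n - a) mod n, False))"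

text \<open>Elements of M(D_n,2): (g, alpha) with alpha in Z_2 encoded as bool (True = 1).\<close>

type_synonym mvert = "dih \<times> bool"

definition M_carrier :: "nat \<Rightarrow> mvert set" where
  "M_carrier n = dih_carrier n \<times> UNIV"

text \<open>(g1,a1) o (g2,a2) = (g1^(1-a2) g2^((-1)^a1) g1^(a2), a1 + a2).\<close>
definition M_op :: "nat \<Rightarrow> mvert \<Rightarrow> mvert \<Rightarrow> mvert" where
  "M_op n p q = (case p of (g1, a1) \<Rightarrow> case q of (g2, a2) \<Rightarrow>
     (let g2' = (if a1 then dih_inv n g2 else g2) in
       (if a2 then dih_mult n g2' g1 else dih_mult n g1 g2'), a1 \<noteq> a2))"

definition assoc_hyperedges :: "nat \<Rightarrow> mvert set set" where
  "assoc_hyperedges n = {e. \<exists>a b c. a \<in> M_carrier n \<and> b \<in> M_carrier n \<and> c \<in> M_carrier n \<and>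
      a \<noteq> b \<and> b \<noteq> c \<and> a \<noteq> c \<and> e = {a, b, c} \<and>
      M_op n (M_op n a b) c = M_op n a (M_op n b c)}"

definition covering_number :: "nat \<Rightarrow> nat" where
  "covering_number n = (LEAST k. \<exists>C. C \<subseteq> assoc_hyperedges n \<and> finite C \<and> card C = k \<and>
      \<Union>C = M_carrier n)"

end

theory Submission imports Defs begin

text \<open>Each hyperedge has three vertices, so a cover of the 4n vertices needs at least
  \<lceil>4n/3\<rceil> = n + \<lceil>n/3\<rceil> edges. Conversely, within each of the four classes
  (rotation or reflection, \<alpha> = 0 or 1) any three elements associate, because
  \<open>\<circ>\<close> restricted to a class reduces to identities such as \<open>c b\<^sup>-\<^sup>1 a = a b\<^sup>-\<^sup>1 c\<close>, which
  hold for commuting rotations and for reflections (a product of three reflections is an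
  involution). Splitting the indices 0, \<dots>, n-1 into consecutive triples covers everything
  except the last n mod 3 indices of each class with 4\<lfloor>n/3\<rfloor> edges; the leftover
  4 or 8 vertices are covered by 2 or 3 mixed edges.\<close>

lemma dih_mult_int:
  assumes "b < n"
  shows "dih_mult n (a, s) (b, t) =
    (nat ((int a + (if s then - int b else int b)) mod int n), s \<noteq> t)"
proof -
  have "(int a + int n - int b) mod int n = (int a - int b) mod int n"
    by (metis add_diff_eq diff_add_eq mod_add_self2)
  with assms show ?thesis
    unfolding dih_mult_def by (auto simp: nat_mod_as_int of_nat_diff mod_simps)
qed

lemma dih_inv_int:
  "a < n \<Longrightarrow> dih_inv n (a, s) = (if s then (a, s) else (nat ((- int a) mod int n), False))"
  unfolding dih_inv_def by (auto simp: nat_mod_as_int of_nat_diff mod_simps)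

lemma nat_mod_int_less [simp]: "0 < n \<Longrightarrow> nat (z mod int n) < n"
  by (simp add: nat_less_iff)

lemmas M_op_simps = M_op_def dih_mult_int dih_inv_int mod_simps algebra_simps

lemma M_op_assoc_same_class:
  assumes "a < n" "b < n" "c < n"
  shows "M_op n (M_op n ((a, s), \<alpha>) ((b, s), \<alpha>)) ((c, s), \<alpha>) =
         M_op n ((a, s), \<alpha>) (M_op n ((b, s), \<alpha>) ((c, s), \<alpha>))"
  using assms by (cases s; cases \<alpha>) (simp_all add: M_op_simps)

lemma M_op_assoc_rotations:
  assumes "a < n" "b < n" "c < n"
  shows "M_op n (M_op n ((a, False), False) ((b, False), False)) ((c, False), True) =
         M_op n ((a, False), False) (M_op n ((b, False), False) ((c, False), True))"
  using assms by (simp add: M_op_simps)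

lemma M_op_assoc_rotation_reflections:
  assumes "a < n" "b < n"
  shows "M_op n (M_op n ((a, False), True) ((b, True), False)) (((a + b) mod n, True), True) =
         M_op n ((a, False), True) (M_op n ((b, True), False) (((a + b) mod n, True), True))"
  using assms by (simp add: M_op_simps nat_mod_as_int)

lemma mem_M_carrier [simp]: "((k, s), \<alpha>) \<in> M_carrier n \<longleftrightarrow> k < n"
  by (simp add: M_carrier_def dih_carrier_def)

lemma assoc_hyperedgesI:
  "\<lbrakk>a \<in> M_carrier n; b \<in> M_carrier n; c \<in> M_carrier n; a \<noteq> b; b \<noteq> c; a \<noteq> c;
    M_op n (M_op n a b) c = M_op n a (M_op n b c)\<rbrakk> \<Longrightarrow> {a, b, c} \<in> assoc_hyperedges n"
  unfolding assoc_hyperedges_def by blast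

lemma triple_in_assoc_hyperedges:
  "3 * i + 2 < n \<Longrightarrow>
    {((3 * i, s), \<alpha>), ((3 * i + 1, s), \<alpha>), ((3 * i + 2, s), \<alpha>)} \<in> assoc_hyperedges n"
  by (rule assoc_hyperedgesI) (auto intro: M_op_assoc_same_class)

lemma rotations_in_assoc_hyperedges:
  "\<lbrakk>a < n; b < n; c < n; a \<noteq> b\<rbrakk> \<Longrightarrow>
    {((a, False), False), ((b, False), False), ((c, False), True)} \<in> assoc_hyperedges n"
  by (rule assoc_hyperedgesI) (simp_all add: M_op_assoc_rotations)

lemma rotation_reflections_in_assoc_hyperedges:
  "\<lbrakk>a < n; b < n; c = (a + b) mod n\<rbrakk> \<Longrightarrow>
    {((a, False), True), ((b, True), False), ((c, True), True)} \<in> assoc_hyperedges n"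
  by (rule assoc_hyperedgesI) (simp_all add: M_op_assoc_rotation_reflections)

lemma card_M_carrier: "card (M_carrier n) = 4 * n"
proof -
  have "M_carrier n = ({..<n} \<times> (UNIV :: bool set)) \<times> (UNIV :: bool set)"
    by (auto simp: M_carrier_def dih_carrier_def)
  then show ?thesis by (simp add: card_cartesian_product)
qed

lemma card_assoc_hyperedge:
  assumes "e \<in> assoc_hyperedges n"
  shows "card e = 3"
proof -
  from assms obtain a b c where "e = {a, b, c}" "a \<noteq> b" "b \<noteq> c" "a \<noteq> c"
    unfolding assoc_hyperedges_def by blast
  then show ?thesis by simp
qed

lemma assoc_hyperedge_subset: "e \<in> assoc_hyperedges n \<Longrightarrow> e \<subseteq> M_carrier n"
  unfolding assoc_hyperedges_def by blast

definition is_cover :: "nat \<Rightarrow> mvert set set \<Rightarrow> bool" where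
  "is_cover n C \<longleftrightarrow> C \<subseteq> assoc_hyperedges n \<and> finite C \<and> \<Union>C = M_carrier n"

lemma card_cover_ge:
  assumes "is_cover n C"
  shows "4 * n \<le> 3 * card C"
proof -
  have "4 * n = card (\<Union>C)"
    using assms card_M_carrier by (simp add: is_cover_def)
  also have "\<dots> \<le> (\<Sum>e\<in>C. card e)"
    by (rule card_Union_le_sum_card)
  also have "\<dots> = (\<Sum>e\<in>C. 3)"
    using assms card_assoc_hyperedge by (intro sum.cong) (auto simp: is_cover_def)
  also have "\<dots> = 3 * card C"
    by simp
  finally show ?thesis .
qed

lemma covering_number_eqI:
  assumes "is_cover n C" "card C \<le> K" "\<And>C. is_cover n C \<Longrightarrow> K \<le> card C"
  shows "covering_number n = K"
proof -
  have cn: "covering_number n = (LEAST k. \<exists>C. is_cover n C \<and> card C = k)"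
    unfolding covering_number_def is_cover_def by metis
  show ?thesis
    unfolding cn
  proof (rule Least_equality)
    have "card C = K"
      using assms(2) assms(3)[OF assms(1)] by simp
    with assms(1) show "\<exists>C. is_cover n C \<and> card C = K" by blast
  qed (use assms(3) in blast)
qed

definition block_edges :: "nat \<Rightarrow> mvert set set" where
  "block_edges n = (\<lambda>(i, s, \<alpha>). {((3 * i, s), \<alpha>), ((3 * i + 1, s), \<alpha>), ((3 * i + 2, s), \<alpha>)})
     ` ({..<n div 3} \<times> UNIV \<times> UNIV)"

definition tail_vertices :: "nat \<Rightarrow> mvert set" where
  "tail_vertices n = {((k, s), \<alpha>) | k s \<alpha>. 3 * (n div 3) \<le> k \<and> k < n}"

lemma block_edges_subset: "block_edges n \<subseteq> assoc_hyperedges n"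
proof
  fix e assume "e \<in> block_edges n"
  then obtain i s \<alpha> where "i < n div 3"
    and e: "e = {((3 * i, s), \<alpha>), ((3 * i + 1, s), \<alpha>), ((3 * i + 2, s), \<alpha>)}"
    unfolding block_edges_def by auto
  then have "3 * i + 2 < n" by presburger
  then show "e \<in> assoc_hyperedges n"
    unfolding e by (rule triple_in_assoc_hyperedges)
qed

lemma card_block_edges_le: "card (block_edges n) \<le> 4 * (n div 3)"
proof -
  have "card (block_edges n) \<le> card ({..<n div 3} \<times> (UNIV :: bool set) \<times> (UNIV :: bool set))"
    unfolding block_edges_def by (rule card_image_le) simp
  also have "\<dots> = 4 * (n div 3)"
    by (simp add: card_cartesian_product UNIV_bool)
  finally show ?thesis .
qed

lemma M_carrier_subset_Union_block_edges:
  "M_carrier n \<subseteq> \<Union>(block_edges n) \<union> tail_vertices n"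
proof
  fix v assume "v \<in> M_carrier n"
  then obtain k s \<alpha> where v: "v = ((k, s), \<alpha>)" and "k < n"
    by (cases v) (auto simp: M_carrier_def dih_carrier_def)
  show "v \<in> \<Union>(block_edges n) \<union> tail_vertices n"
  proof (cases "k < 3 * (n div 3)")
    case True
    define i where "i = k div 3"
    have "i < n div 3" using True unfolding i_def by presburger
    have "{((3 * i, s), \<alpha>), ((3 * i + 1, s), \<alpha>), ((3 * i + 2, s), \<alpha>)} \<in> block_edges n"
      unfolding block_edges_def by (rule image_eqI[where x = "(i, s, \<alpha>)"]) (simp_all add: \<open>i < n div 3\<close>)
    moreover have "k = 3 * i \<or> k = 3 * i + 1 \<or> k = 3 * i + 2"
      unfolding i_def by presburger
    ultimately show ?thesis using v by blast
  next
    case False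
    with \<open>k < n\<close> show ?thesis using v by (auto simp: tail_vertices_def)
  qed
qed

lemma is_cover_block_edges_Un:
  assumes "F \<subseteq> assoc_hyperedges n" "finite F" "tail_vertices n \<subseteq> \<Union>F"
  shows "is_cover n (block_edges n \<union> F)"
proof -
  have "\<Union>(block_edges n \<union> F) \<subseteq> M_carrier n"
    using assms(1) block_edges_subset assoc_hyperedge_subset by blast
  moreover have "finite (block_edges n)"
    unfolding block_edges_def by simp
  ultimately show ?thesis
    using assms block_edges_subset M_carrier_subset_Union_block_edges
    unfolding is_cover_def by blast
qed

lemma tail_cover_mod_1:
  assumes "n \<ge> 2" "n mod 3 = 1"
  obtains F where "F \<subseteq> assoc_hyperedges n" "finite F" "card F \<le> 2" "tail_vertices n \<subseteq> \<Union>F"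
proof -
  define F where "F = {{((n - 1, False), False), ((0, False), False), ((n - 1, False), True)},
                      {((0, False), True), ((n - 1, True), False), ((n - 1, True), True)}}"
  from assms(1) have "F \<subseteq> assoc_hyperedges n"
    unfolding F_def
    by (simp add: rotations_in_assoc_hyperedges rotation_reflections_in_assoc_hyperedges)
  moreover have "card F \<le> 2"
    unfolding F_def by (simp add: card_insert_if)
  moreover have "tail_vertices n \<subseteq> \<Union>F"
  proof
    fix v assume "v \<in> tail_vertices n"
    then obtain k s \<alpha> where "v = ((k, s), \<alpha>)" "3 * (n div 3) \<le> k" "k < n"
      unfolding tail_vertices_def by blast
    moreover from this have "k = n - 1" using assms(2) by presburger
    ultimately show "v \<in> \<Union>F" unfolding F_def by (cases s; cases \<alpha>) simp_all
  qed
  moreover have "finite F"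
    unfolding F_def by simp
  ultimately show ?thesis
    using that by blast
qed

lemma tail_cover_mod_2:
  assumes "n mod 3 = 2"
  obtains F where "F \<subseteq> assoc_hyperedges n" "finite F" "card F \<le> 3" "tail_vertices n \<subseteq> \<Union>F"
proof -
  define F where "F = {{((n - 2, False), False), ((n - 1, False), False), ((n - 2, False), True)},
                      {((n - 1, False), True), ((n - 1, True), False), ((n - 2, True), True)},
                      {((1, False), True), ((n - 2, True), False), ((n - 1, True), True)}}"
  have "n \<ge> 2" using assms by presburger
  have "n - 2 = (n - 1 + (n - 1)) mod n"
  proof -
    have "n - 1 + (n - 1) = (n - 2) + n" using \<open>n \<ge> 2\<close> by linarith
    then show ?thesis using \<open>n \<ge> 2\<close> by (simp only: mod_add_self2) simp
  qed
  then have "{((n - 1, False), True), ((n - 1, True), False), ((n - 2, True), True)}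
      \<in> assoc_hyperedges n"
    using \<open>n \<ge> 2\<close> by (intro rotation_reflections_in_assoc_hyperedges) simp_all
  moreover have "{((1, False), True), ((n - 2, True), False), ((n - 1, True), True)}
      \<in> assoc_hyperedges n"
    using \<open>n \<ge> 2\<close> by (intro rotation_reflections_in_assoc_hyperedges) simp_all
  moreover have "{((n - 2, False), False), ((n - 1, False), False), ((n - 2, False), True)}
      \<in> assoc_hyperedges n"
    using \<open>n \<ge> 2\<close> by (intro rotations_in_assoc_hyperedges) simp_all
  ultimately have "F \<subseteq> assoc_hyperedges n"
    unfolding F_def by simp
  moreover have "card F \<le> 3"
    unfolding F_def by (simp add: card_insert_if)
  moreover have "tail_vertices n \<subseteq> \<Union>F"
  proof
    fix v assume "v \<in> tail_vertices n"
    then obtain k s \<alpha> where "v = ((k, s), \<alpha>)" "3 * (n div 3) \<le> k" "k < n"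
      unfolding tail_vertices_def by blast
    moreover from this have "k = n - 2 \<or> k = n - 1" using assms by presburger
    ultimately show "v \<in> \<Union>F" unfolding F_def by (cases s; cases \<alpha>; elim disjE) simp_all
  qed
  moreover have "finite F"
    unfolding F_def by simp
  ultimately show ?thesis
    using that by blast
qed

lemma tail_cover:
  assumes "n \<ge> 2"
  obtains F where "F \<subseteq> assoc_hyperedges n" "finite F" "tail_vertices n \<subseteq> \<Union>F"
    "4 * (n div 3) + card F \<le> n + (n + 2) div 3"
proof -
  consider "n mod 3 = 0" | "n mod 3 = 1" | "n mod 3 = 2" by atomize_elim presburger
  then show ?thesis
  proof cases
    case 1
    then have "3 * (n div 3) = n" by presburger
    then have "tail_vertices n = {}" by (auto simp: tail_vertices_def)
    with \<open>3 * (n div 3) = n\<close> show ?thesis by (intro that[of "{}"]) auto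
  next
    case 2
    with assms obtain F where "F \<subseteq> assoc_hyperedges n" "finite F"
      "card F \<le> 2" "tail_vertices n \<subseteq> \<Union>F" by (rule tail_cover_mod_1)
    moreover have "4 * (n div 3) + 2 = n + (n + 2) div 3" using 2 by presburger
    ultimately show ?thesis by (intro that[of F]) auto
  next
    case 3
    then obtain F where "F \<subseteq> assoc_hyperedges n" "finite F"
      "card F \<le> 3" "tail_vertices n \<subseteq> \<Union>F" by (rule tail_cover_mod_2)
    moreover have "4 * (n div 3) + 3 = n + (n + 2) div 3" using 3 by presburger
    ultimately show ?thesis by (intro that[of F]) auto
  qed
qed

lemma nat_ceiling_divide_3: "nat \<lceil>real m / 3\<rceil> = (m + 2) div 3"
proof -
  have "\<lceil>real m / 3\<rceil> = - (- int m div 3)"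
    using ceiling_divide_eq_div[of "int m" 3] by simp
  also have "\<dots> = int ((m + 2) div 3)"
    by (simp add: zdiv_int)
  finally show ?thesis by simp
qed

theorem mainTheorem7:
  fixes n :: nat
  assumes "n \<ge> 3"
  shows "covering_number n = n + nat \<lceil>real n / 3\<rceil>"
proof -
  from assms have "n \<ge> 2" by simp
  then obtain F where F: "F \<subseteq> assoc_hyperedges n" "finite F" "tail_vertices n \<subseteq> \<Union>F"
    and card_F: "4 * (n div 3) + card F \<le> n + (n + 2) div 3"
    by (rule tail_cover)
  have "covering_number n = n + (n + 2) div 3"
  proof (rule covering_number_eqI)
    show "is_cover n (block_edges n \<union> F)"
      using F by (rule is_cover_block_edges_Un)
    show "card (block_edges n \<union> F) \<le> n + (n + 2) div 3"
      using card_Un_le[of "block_edges n" F] card_block_edges_le[of n] card_F by linarith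
  next
    fix C assume "is_cover n C"
    then have "4 * n \<le> 3 * card C" by (rule card_cover_ge)
    then show "n + (n + 2) div 3 \<le> card C" by linarith
  qed
  then show ?thesis
    using nat_ceiling_divide_3[of n] by simp
qed

end
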